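(* Let $D_+, D_-$ be a pair of SBP operators of order $q\ge1$ on $[a,b]$ with associated data $H,S,\mathbf{p}_0,\mathbf{p}_n,\mathbf{x}$, and let $\tilde D_+ = D_+ + H^{-1}\mathbf{p}_0\mathbf{p}_0^\top$. Let $(\lambda,\mathbf{w})$ be an eigenpair of $\tilde D_+$ (over $\mathbb{C}$) with $\operatorname{Re}(\lambda)=0$. Then $\lambda$ is a normal eigenvalue of $\tilde D_+$ with respect to the inner product $\langle \mathbf{f},\mathbf{g}\rangle = \mathbf{f}^* H\mathbf{g}$, i.e.: (a) every eigenvector of $\tilde D_+$ corresponding to $\lambda$ is $\langle\cdot,\cdot\rangle$-orthogonal to every eigenvector of $\tilde D_+$ corresponding to any eigenvalue $\mu\ne\lambda$; and (b) the algebraic multiplicity of $\lambda$ equals its geometric multiplicity.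
   Context: Let $[a,b]$ be an interval with $b>a$ and $n\ge 1$. For $\mathbf{x}\in\mathbb{R}^{n+1}$, $\mathbf{x}^j$ denotes elementwise exponentiation, with $\mathbf{x}^0=\mathbf{1}=(1,\dots,1)^\top$. Matrices $D_+, D_-\in\mathbb{R}^{(n+1)\times(n+1)}$ form a pair of SBP (summation-by-parts) operators of order $q\ge 1$ on $[a,b]$ if there exist matrices $H,S\in\mathbb{R}^{(n+1)\times(n+1)}$ and vectors $\mathbf{p}_0,\mathbf{p}_n,\mathbf{x}\in\mathbb{R}^{n+1}$ such that: (A) $D_\pm \mathbf{x}^j = j\mathbf{x}^{j-1}$, $\mathbf{p}_0^\top\mathbf{x}^j = a^j$, $\mathbf{p}_n^\top \mathbf{x}^j = b^j$ for $j=0,\dots,q$ (with $0\cdot\mathbf{x}^{-1}:=\mathbf{0}$); (B) $H=H^\top$ is positive definite; (C) $HD_+ + D_+^\top H = -\mathbf{p}_0\mathbf{p}_0^\top + \mathbf{p}_n\mathbf{p}_n^\top + S$ with $S=S^\top$ positive semidefinite; (D) $HD_+ + D_-^\top H = -\mathbf{p}_0\mathbf{p}_0^\top + \mathbf{p}_n\mathbf{p}_n^\top$; (E) $\mathbf{x}=(x_0,\dots,x_n)^\top$ with $x_i\ne x_j$ for $i\ne j$. The superscript $*$ denotes conjugate transpose. *)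

theory Defs
  imports "Jordan_Normal_Form.Jordan_Normal_Form_Uniqueness" "Jordan_Normal_Form.Conjugate"
begin

definition vpow :: "real vec \<Rightarrow> nat \<Rightarrow> real vec" where
  "vpow x j = vec (dim_vec x) (\<lambda>i. (x $ i) ^ j)"

definition outer :: "real vec \<Rightarrow> real vec \<Rightarrow> real mat" where
  "outer p r = mat (dim_vec p) (dim_vec r) (\<lambda>(i,j). p $ i * r $ j)"

definition SBP_pair ::
  "nat \<Rightarrow> nat \<Rightarrow> real \<Rightarrow> real \<Rightarrow> real mat \<Rightarrow> real mat \<Rightarrow> real mat \<Rightarrow> real mat
     \<Rightarrow> real vec \<Rightarrow> real vec \<Rightarrow> real vec \<Rightarrow> bool" where
  "SBP_pair n q a b Dp Dm H S p0 pn x \<longleftrightarrow>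
     Dp \<in> carrier_mat (n+1) (n+1) \<and> Dm \<in> carrier_mat (n+1) (n+1) \<and>
     H \<in> carrier_mat (n+1) (n+1) \<and> S \<in> carrier_mat (n+1) (n+1) \<and>
     p0 \<in> carrier_vec (n+1) \<and> pn \<in> carrier_vec (n+1) \<and> x \<in> carrier_vec (n+1) \<and>
     \<comment> \<open>(A)\<close>
     (\<forall>j\<le>q. Dp *\<^sub>v vpow x j = of_nat j \<cdot>\<^sub>v vpow x (j - 1) \<and>
             Dm *\<^sub>v vpow x j = of_nat j \<cdot>\<^sub>v vpow x (j - 1) \<and>
             p0 \<bullet> vpow x j = a ^ j \<and> pn \<bullet> vpow x j = b ^ j) \<and>
     \<comment> \<open>(B)\<close>
     H\<^sup>T = H \<and> (\<forall>v \<in> carrier_vec (n+1). v \<noteq> 0\<^sub>v (n+1) \<longrightarrow> v \<bullet> (H *\<^sub>v v) > 0) \<and>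
     \<comment> \<open>(C)\<close>
     H * Dp + Dp\<^sup>T * H = - outer p0 p0 + outer pn pn + S \<and>
     S\<^sup>T = S \<and> (\<forall>v \<in> carrier_vec (n+1). v \<bullet> (S *\<^sub>v v) \<ge> 0) \<and>
     \<comment> \<open>(D)\<close>
     H * Dp + Dm\<^sup>T * H = - outer p0 p0 + outer pn pn \<and>
     \<comment> \<open>(E)\<close>
     (\<forall>i<n+1. \<forall>j<n+1. i \<noteq> j \<longrightarrow> x $ i \<noteq> x $ j)"

abbreviation cmat :: "real mat \<Rightarrow> complex mat" where
  "cmat A \<equiv> map_mat complex_of_real A"

definition H_inner :: "real mat \<Rightarrow> complex vec \<Rightarrow> complex vec \<Rightarrow> complex" where
  "H_inner H f g = conjugate f \<bullet> (cmat H *\<^sub>v g)"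

definition alg_mult :: "complex mat \<Rightarrow> complex \<Rightarrow> nat" where
  "alg_mult A l = Polynomial.order l (char_poly A)"

definition geom_mult :: "complex mat \<Rightarrow> complex \<Rightarrow> nat" where
  "geom_mult A l = kernel_dim (char_matrix A l)"

end

theory Submission
  imports Defs "Jordan_Normal_Form.Jordan_Normal_Form_Existence"
begin

text \<open>
  Write \<open>A\<close> for the corrected operator \<open>D\<^sub>+ + H\<^sup>-\<^sup>1 p\<^sub>0 p\<^sub>0\<^sup>T\<close>. The SBP property (C) turns into the
  energy identity \<open>H A + A\<^sup>T H = M\<close> with \<open>M = p\<^sub>0 p\<^sub>0\<^sup>T + p\<^sub>n p\<^sub>n\<^sup>T + S\<close> positive semidefinite.
  If \<open>A v = \<lambda> v\<close> with \<open>Re \<lambda> = 0\<close>, then \<open>v\<^sup>* M v = 2 Re \<lambda> \<langle>v,v\<rangle> = 0\<close>, so \<open>M v = 0\<close>; feeding this back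
  into the energy identity gives \<open>\<langle>v, (A - \<lambda>) y\<rangle> = 0\<close> for every \<open>y\<close>. With \<open>y\<close> an eigenvector for
  \<open>\<mu> \<noteq> \<lambda>\<close> this is the orthogonality; with \<open>y\<close> such that \<open>z = (A - \<lambda>) y\<close> is an eigenvector it gives
  \<open>\<langle>z, z\<rangle> = 0\<close>, so there are no Jordan chains of length two and, by the Jordan normal form, the
  algebraic and geometric multiplicities agree.
\<close>

lemma linear_coeff_eq_0_if_quadratic_nonneg:
  fixes Y c :: real
  assumes nonneg: "\<And>t. 0 \<le> 2*t*Y + t^2*c"
  shows "Y = 0"
proof -
  have "0 \<le> c" using nonneg[of 1] nonneg[of "-1"] by simp
  define t where "t = - Y / (c + 1)"
  have t: "t * (c + 1) = - Y" unfolding t_def using \<open>0 \<le> c\<close> by simp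
  have "(2*t*Y + t^2*c) * (c+1)^2 = 2*Y*(t*(c+1))*(c+1) + (t*(c+1))^2*c"
    by (simp add: power2_eq_square algebra_simps)
  also have "\<dots> = -(Y^2 * (c + 2))" unfolding t by (simp add: power2_eq_square algebra_simps)
  finally have "Y^2 * (c + 2) \<le> 0"
    using nonneg[of t] by (metis mult_nonneg_nonneg neg_0_le_iff_le zero_le_power2)
  with \<open>0 \<le> c\<close> show "Y = 0"
    by (smt (verit) mult_pos_pos zero_less_power2)
qed

lemma psd_quadratic_form_eq_0_imp_mult_eq_0:
  fixes M :: "real mat" and r :: "real vec"
  assumes M: "M \<in> carrier_mat N N" and M_sym: "M\<^sup>T = M"
    and psd: "\<forall>v\<in>carrier_vec N. v \<bullet> (M *\<^sub>v v) \<ge> 0"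
    and r: "r \<in> carrier_vec N" and zero: "r \<bullet> (M *\<^sub>v r) = 0"
  shows "M *\<^sub>v r = 0\<^sub>v N"
proof -
  define y where "y = M *\<^sub>v r"
  have y: "y \<in> carrier_vec N" using M r unfolding y_def by auto
  have ry: "r \<bullet> (M *\<^sub>v y) = y \<bullet> y"
    using transpose_vec_mult_scalar[OF M y r] M_sym comm_scalar_prod[OF y r]
    unfolding y_def by simp
  have "0 \<le> 2*t*(y \<bullet> y) + t^2*(y \<bullet> (M *\<^sub>v y))" for t
  proof -
    have "M *\<^sub>v (r + t \<cdot>\<^sub>v y) = M *\<^sub>v r + t \<cdot>\<^sub>v (M *\<^sub>v y)"
      using M r y by (simp add: mult_add_distrib_mat_vec mult_mat_vec)
    then have "(r + t \<cdot>\<^sub>v y) \<bullet> (M *\<^sub>v (r + t \<cdot>\<^sub>v y))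
       = r \<bullet> (M *\<^sub>v r) + t * (r \<bullet> (M *\<^sub>v y)) + t * (y \<bullet> (M *\<^sub>v r)) + t*t*(y \<bullet> (M *\<^sub>v y))"
      using M r y
      by (simp add: add_scalar_prod_distrib scalar_prod_add_distrib smult_scalar_prod_distrib
          scalar_prod_smult_distrib algebra_simps)
    moreover have "(r + t \<cdot>\<^sub>v y) \<bullet> (M *\<^sub>v (r + t \<cdot>\<^sub>v y)) \<ge> 0" using psd r y by auto
    ultimately show ?thesis using zero ry unfolding y_def by (simp add: power2_eq_square)
  qed
  then have "y \<bullet> y = 0" by (rule linear_coeff_eq_0_if_quadratic_nonneg)
  then show ?thesis using conjugate_square_eq_0_vec[OF y] unfolding y_def by simp
qed

lemma cmat_mult_vec_index:
  fixes M :: "real mat" and v :: "complex vec"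
  assumes "M \<in> carrier_mat N N" and "v \<in> carrier_vec N" and "i < N"
  shows "(cmat M *\<^sub>v v) $ i = complex_of_real ((M *\<^sub>v map_vec Re v) $ i)
          + \<i> * complex_of_real ((M *\<^sub>v map_vec Im v) $ i)"
  using assms by (auto simp: mult_mat_vec_def scalar_prod_def complex_eq_iff Re_sum Im_sum)

lemma conjugate_cmat_mult_vec:
  fixes M :: "real mat" and v :: "complex vec"
  assumes "M \<in> carrier_mat N N" and "v \<in> carrier_vec N"
  shows "conjugate (cmat M *\<^sub>v v) = cmat M *\<^sub>v conjugate v"
  using assms by (intro eq_vecI) (auto simp: mult_mat_vec_def scalar_prod_def cnj_sum)

lemma Re_H_inner_self:
  fixes M :: "real mat" and v :: "complex vec"
  assumes M: "M \<in> carrier_mat N N" and v: "v \<in> carrier_vec N"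
  shows "Re (H_inner M v v)
    = map_vec Re v \<bullet> (M *\<^sub>v map_vec Re v) + map_vec Im v \<bullet> (M *\<^sub>v map_vec Im v)"
proof -
  have "Re (H_inner M v v) = (\<Sum>i<N. Re (cnj (v $ i) * (cmat M *\<^sub>v v) $ i))"
    using M v by (simp add: H_inner_def scalar_prod_def Re_sum lessThan_atLeast0)
  also have "\<dots> = (\<Sum>i<N. Re (v $ i) * (M *\<^sub>v map_vec Re v) $ i + Im (v $ i) * (M *\<^sub>v map_vec Im v) $ i)"
    by (rule sum.cong) (simp_all add: cmat_mult_vec_index[OF M v])
  also have "\<dots> = map_vec Re v \<bullet> (M *\<^sub>v map_vec Re v) + map_vec Im v \<bullet> (M *\<^sub>v map_vec Im v)"
    using M v by (simp add: scalar_prod_def sum.distrib lessThan_atLeast0)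
  finally show ?thesis .
qed

lemma psd_Re_H_inner_self_eq_0_imp_mult_eq_0:
  fixes M :: "real mat" and v :: "complex vec"
  assumes M: "M \<in> carrier_mat N N" and M_sym: "M\<^sup>T = M"
    and psd: "\<forall>v\<in>carrier_vec N. v \<bullet> (M *\<^sub>v v) \<ge> 0"
    and v: "v \<in> carrier_vec N" and zero: "Re (H_inner M v v) = 0"
  shows "cmat M *\<^sub>v v = 0\<^sub>v N"
proof -
  have parts: "map_vec Re v \<in> carrier_vec N" "map_vec Im v \<in> carrier_vec N" using v by auto
  then have "map_vec Re v \<bullet> (M *\<^sub>v map_vec Re v) = 0" "map_vec Im v \<bullet> (M *\<^sub>v map_vec Im v) = 0"
    using psd zero Re_H_inner_self[OF M v] by (smt (verit))+
  then have "M *\<^sub>v map_vec Re v = 0\<^sub>v N" "M *\<^sub>v map_vec Im v = 0\<^sub>v N"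
    using psd_quadratic_form_eq_0_imp_mult_eq_0[OF M M_sym psd] parts by auto
  then show ?thesis using M v cmat_mult_vec_index[OF M v] by (intro eq_vecI) auto
qed

lemma pd_Re_H_inner_self_eq_0_imp_eq_0:
  fixes H :: "real mat" and v :: "complex vec"
  assumes H: "H \<in> carrier_mat N N"
    and pd: "\<forall>v\<in>carrier_vec N. v \<noteq> 0\<^sub>v N \<longrightarrow> v \<bullet> (H *\<^sub>v v) > 0"
    and v: "v \<in> carrier_vec N" and zero: "Re (H_inner H v v) = 0"
  shows "v = 0\<^sub>v N"
proof -
  have nonneg: "u \<bullet> (H *\<^sub>v u) \<ge> 0" if "u \<in> carrier_vec N" for u
    using pd that H by (cases "u = 0\<^sub>v N") (auto intro: less_imp_le)
  have parts: "map_vec Re v \<in> carrier_vec N" "map_vec Im v \<in> carrier_vec N" using v by auto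
  then have "map_vec Re v \<bullet> (H *\<^sub>v map_vec Re v) = 0" "map_vec Im v \<bullet> (H *\<^sub>v map_vec Im v) = 0"
    using nonneg zero Re_H_inner_self[OF H v] by (smt (verit))+
  then have Re0: "map_vec Re v = 0\<^sub>v N" and Im0: "map_vec Im v = 0\<^sub>v N"
    using pd parts by force+
  show ?thesis
  proof (rule eq_vecI)
    fix i assume "i < dim_vec (0\<^sub>v N :: complex vec)"
    then show "v $ i = 0\<^sub>v N $ i"
      using v arg_cong[OF Re0, of "\<lambda>u. u $ i"] arg_cong[OF Im0, of "\<lambda>u. u $ i"]
      by (simp add: complex_eq_iff)
  qed (use v in simp)
qed

lemma H_inner_add_right:
  assumes "H \<in> carrier_mat N N" "u \<in> carrier_vec N" "v \<in> carrier_vec N" "w \<in> carrier_vec N"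
  shows "H_inner H u (v + w) = H_inner H u v + H_inner H u w"
  using assms by (simp add: H_inner_def mult_add_distrib_mat_vec[of _ N N] scalar_prod_add_distrib[of _ N])

lemma H_inner_smult_right:
  assumes "H \<in> carrier_mat N N" "u \<in> carrier_vec N" "v \<in> carrier_vec N"
  shows "H_inner H u (c \<cdot>\<^sub>v v) = c * H_inner H u v"
  using assms by (simp add: H_inner_def mult_mat_vec[of _ N N] scalar_prod_smult_distrib[of _ N])

lemma H_inner_smult_left:
  assumes "H \<in> carrier_mat N N" "u \<in> carrier_vec N" "v \<in> carrier_vec N"
  shows "H_inner H (c \<cdot>\<^sub>v u) v = cnj c * H_inner H u v"
  using assms by (simp add: H_inner_def conjugate_smult_vec smult_scalar_prod_distrib[of _ N])

lemma H_inner_eq_0_if_sym_mult_eq_0: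
  fixes M :: "real mat"
  assumes M: "M \<in> carrier_mat N N" and M_sym: "M\<^sup>T = M"
    and v: "v \<in> carrier_vec N" and Mv: "cmat M *\<^sub>v v = 0\<^sub>v N" and y: "y \<in> carrier_vec N"
  shows "H_inner M v y = 0"
proof -
  have "H_inner M v y = ((cmat M)\<^sup>T *\<^sub>v conjugate v) \<bullet> y"
    unfolding H_inner_def using transpose_vec_mult_scalar[of "cmat M" N N y "conjugate v"] M v y
    by simp
  also have "\<dots> = conjugate (cmat M *\<^sub>v v) \<bullet> y"
    using M_sym conjugate_cmat_mult_vec[OF M v] by (simp add: map_mat_transpose)
  finally show ?thesis using Mv y by simp
qed

lemma char_matrix_mult_vec:
  assumes "A \<in> carrier_mat N N" and "v \<in> carrier_vec N"
  shows "char_matrix A e *\<^sub>v v = A *\<^sub>v v + (-e) \<cdot>\<^sub>v v"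
  unfolding char_matrix_def
  by (rule eq_vecI) (use assms in \<open>auto simp: add_scalar_prod_distrib[of _ N]\<close>)

lemma alg_mult_eq_dim_gen_eigenspace:
  fixes A :: "complex mat"
  assumes A: "A \<in> carrier_mat N N" and "N \<le> m"
  shows "alg_mult A e = dim_gen_eigenspace A e m"
proof -
  obtain as where "char_poly A = (\<Prod>a\<leftarrow>as. [:- a, 1:])"
    using char_poly_factorized[OF A] by auto
  then obtain n_as where jnf: "jordan_nf A n_as" using jordan_nf_exists[OF A] by blast
  from jnf obtain n' P Q where "{A, jordan_matrix n_as, P, Q} \<subseteq> carrier_mat n' n'"
    unfolding jordan_nf_def using similar_matD by blast
  then have "sum_list (map fst n_as) = N"
    using A by (metis carrier_matD(1) insert_subset jordan_matrix_dim(1))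
  have small: "min m k = k" if "k \<in> set (map fst [(k, e')\<leftarrow>n_as . e' = e])" for k
  proof -
    have "k \<in> set (map fst n_as)" using that by auto
    then have "k \<le> N"
      using member_le_sum_list[of k "map fst n_as"] \<open>sum_list (map fst n_as) = N\<close> by simp
    then show ?thesis using \<open>N \<le> m\<close> by simp
  qed
  have "alg_mult A e = sum_list (map fst [(k, e')\<leftarrow>n_as . e' = e])"
    unfolding alg_mult_def jordan_nf_order[OF jnf] by (simp add: case_prod_beta')
  also have "\<dots> = (\<Sum>k\<leftarrow>map fst [(k, e')\<leftarrow>n_as . e' = e]. min m k)"
    by (simp only: map_idI[OF small])
  also have "\<dots> = dim_gen_eigenspace A e m" by (rule dim_gen_eigenspace[OF jnf, symmetric])
  finally show ?thesis .
qed

lemma mat_kernel_power_eq_if_square_kernel: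
  fixes C :: "'a :: field mat"
  assumes C: "C \<in> carrier_mat N N"
    and sq: "\<And>y. y \<in> carrier_vec N \<Longrightarrow> C *\<^sub>v (C *\<^sub>v y) = 0\<^sub>v N \<Longrightarrow> C *\<^sub>v y = 0\<^sub>v N"
  shows "mat_kernel (C ^\<^sub>m Suc k) = mat_kernel C"
proof -
  have power_kernel: "C ^\<^sub>m Suc k *\<^sub>v y = 0\<^sub>v N \<longleftrightarrow> C *\<^sub>v y = 0\<^sub>v N" if y: "y \<in> carrier_vec N" for y
    using y
  proof (induction k arbitrary: y)
    case (Suc k)
    have "C ^\<^sub>m Suc (Suc k) *\<^sub>v y = C ^\<^sub>m Suc k *\<^sub>v (C *\<^sub>v y)"
      unfolding pow_mat.simps(2)[of C "Suc k"]
      by (rule assoc_mult_mat_vec[of _ N N _ N]) (use C Suc.prems in auto)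
    then show ?case using Suc C sq by auto
  qed simp
  show ?thesis
    unfolding mat_kernel[OF pow_carrier_mat[OF C]] mat_kernel[OF C] using power_kernel by blast
qed

lemma alg_mult_eq_geom_mult_if_square_kernel:
  fixes A :: "complex mat"
  assumes A: "A \<in> carrier_mat N N"
    and sq: "\<And>y. y \<in> carrier_vec N \<Longrightarrow> char_matrix A e *\<^sub>v (char_matrix A e *\<^sub>v y) = 0\<^sub>v N
               \<Longrightarrow> char_matrix A e *\<^sub>v y = 0\<^sub>v N"
  shows "alg_mult A e = geom_mult A e"
proof -
  let ?C = "char_matrix A e"
  have C: "?C \<in> carrier_mat N N" using A by simp
  have "mat_kernel (?C ^\<^sub>m Suc N) = mat_kernel ?C"
    by (rule mat_kernel_power_eq_if_square_kernel[OF C sq])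
  moreover have "dim_col (?C ^\<^sub>m Suc N) = dim_col ?C"
    using pow_carrier_mat[OF C, of "Suc N"] C by (metis carrier_matD(2))
  ultimately have "kernel_dim (?C ^\<^sub>m Suc N) = kernel_dim ?C"
    unfolding kernel_dim_def by simp
  then show ?thesis
    unfolding alg_mult_eq_dim_gen_eigenspace[OF A le_SucI[OF order.refl]]
      dim_gen_eigenspace_def geom_mult_def .
qed

locale H_accretive =
  fixes N :: nat and A H M :: "real mat"
  assumes A: "A \<in> carrier_mat N N" and H: "H \<in> carrier_mat N N" and M: "M \<in> carrier_mat N N"
    and M_sym: "M\<^sup>T = M" and M_psd: "\<forall>v\<in>carrier_vec N. v \<bullet> (M *\<^sub>v v) \<ge> 0"
    and energy_identity: "H * A + A\<^sup>T * H = M"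
begin

lemma H_inner_energy_identity:
  assumes v: "v \<in> carrier_vec N" and y: "y \<in> carrier_vec N"
  shows "H_inner M v y = H_inner H v (cmat A *\<^sub>v y) + H_inner H (cmat A *\<^sub>v v) y"
proof -
  have Ac: "cmat A \<in> carrier_mat N N" and Hc: "cmat H \<in> carrier_mat N N" using A H by auto
  have "cmat M = cmat (H * A) + cmat (A\<^sup>T * H)"
    unfolding energy_identity[symmetric] using A H by (intro eq_matI) auto
  also have "\<dots> = cmat H * cmat A + (cmat A)\<^sup>T * cmat H"
    using A H by (simp add: of_real_hom.mat_hom_mult[of _ N N _ N] map_mat_transpose)
  finally have "cmat M *\<^sub>v y = cmat H *\<^sub>v (cmat A *\<^sub>v y) + (cmat A)\<^sup>T *\<^sub>v (cmat H *\<^sub>v y)"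
    using Ac Hc y by (simp add: add_mult_distrib_mat_vec[of _ N N] assoc_mult_mat_vec[of _ N N _ N])
  then have "H_inner M v y
      = H_inner H v (cmat A *\<^sub>v y) + conjugate v \<bullet> ((cmat A)\<^sup>T *\<^sub>v (cmat H *\<^sub>v y))"
    unfolding H_inner_def using Ac Hc y v by (simp add: scalar_prod_add_distrib[of _ N])
  also have "conjugate v \<bullet> ((cmat A)\<^sup>T *\<^sub>v (cmat H *\<^sub>v y)) = H_inner H (cmat A *\<^sub>v v) y"
    using transpose_vec_mult_scalar[of "(cmat A)\<^sup>T" N N "cmat H *\<^sub>v y" "conjugate v"] Ac Hc y v
    by (simp add: H_inner_def conjugate_cmat_mult_vec[OF A v])
  finally show ?thesis .
qed

lemma imaginary_eigenvector_mult_M_eq_0: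
  assumes ev: "eigenvector (cmat A) v lam" and re0: "Re lam = 0"
  shows "cmat M *\<^sub>v v = 0\<^sub>v N"
proof -
  have v: "v \<in> carrier_vec N" and Av: "cmat A *\<^sub>v v = lam \<cdot>\<^sub>v v"
    using ev A unfolding eigenvector_def by auto
  have "H_inner M v v = (lam + cnj lam) * H_inner H v v"
    unfolding H_inner_energy_identity[OF v v] Av
    using H v by (simp add: H_inner_smult_right[of _ N] H_inner_smult_left[of _ N] algebra_simps)
  also have "lam + cnj lam = 0" using re0 by (simp add: complex_eq_iff)
  finally show ?thesis
    using psd_Re_H_inner_self_eq_0_imp_mult_eq_0[OF M M_sym M_psd v] by simp
qed

lemma H_inner_char_matrix_imaginary_eigenvector:
  assumes ev: "eigenvector (cmat A) v lam" and re0: "Re lam = 0" and y: "y \<in> carrier_vec N"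
  shows "H_inner H v (char_matrix (cmat A) lam *\<^sub>v y) = 0"
proof -
  have v: "v \<in> carrier_vec N" and Av: "cmat A *\<^sub>v v = lam \<cdot>\<^sub>v v"
    using ev A unfolding eigenvector_def by auto
  have "0 = H_inner M v y"
    using H_inner_eq_0_if_sym_mult_eq_0[OF M M_sym v imaginary_eigenvector_mult_M_eq_0[OF ev re0] y] ..
  also have "\<dots> = H_inner H v (cmat A *\<^sub>v y) + cnj lam * H_inner H v y"
    unfolding H_inner_energy_identity[OF v y] Av using H v y by (simp add: H_inner_smult_left[of _ N])
  also have "cnj lam = - lam" using re0 by (simp add: complex_eq_iff)
  also have "H_inner H v (cmat A *\<^sub>v y) + - lam * H_inner H v y
      = H_inner H v (char_matrix (cmat A) lam *\<^sub>v y)"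
    using A H v y
    by (simp add: char_matrix_mult_vec[of _ N] H_inner_add_right[of _ N] H_inner_smult_right[of _ N])
  finally show ?thesis ..
qed

lemma imaginary_eigenvector_H_orthogonal:
  assumes v: "eigenvector (cmat A) v lam" and re0: "Re lam = 0"
    and u: "eigenvector (cmat A) u mu" and ne: "mu \<noteq> lam"
  shows "H_inner H v u = 0"
proof -
  have vc: "v \<in> carrier_vec N" and uc: "u \<in> carrier_vec N" and Au: "cmat A *\<^sub>v u = mu \<cdot>\<^sub>v u"
    using u v A unfolding eigenvector_def by auto
  have "char_matrix (cmat A) lam *\<^sub>v u = (mu - lam) \<cdot>\<^sub>v u"
    using A uc by (simp add: char_matrix_mult_vec[of _ N] Au add_smult_distrib_vec[symmetric])
  then have "(mu - lam) * H_inner H v u = 0"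
    using H_inner_char_matrix_imaginary_eigenvector[OF v re0 uc] H vc uc
    by (simp add: H_inner_smult_right[of _ N])
  then show ?thesis using ne by simp
qed

lemma imaginary_char_matrix_square_kernel:
  assumes H_pd: "\<forall>v\<in>carrier_vec N. v \<noteq> 0\<^sub>v N \<longrightarrow> v \<bullet> (H *\<^sub>v v) > 0"
    and re0: "Re lam = 0" and y: "y \<in> carrier_vec N"
    and sq: "char_matrix (cmat A) lam *\<^sub>v (char_matrix (cmat A) lam *\<^sub>v y) = 0\<^sub>v N"
  shows "char_matrix (cmat A) lam *\<^sub>v y = 0\<^sub>v N"
proof (rule ccontr)
  define z where "z = char_matrix (cmat A) lam *\<^sub>v y"
  have Ac: "cmat A \<in> carrier_mat N N" using A by simp
  have z: "z \<in> carrier_vec N" unfolding z_def using mult_mat_vec_carrier[OF char_matrix_closed[OF Ac] y] .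
  assume "char_matrix (cmat A) lam *\<^sub>v y \<noteq> 0\<^sub>v N"
  then have "eigenvector (cmat A) z lam"
    using sq z unfolding eigenvector_char_matrix[OF Ac] z_def by simp
  then have "H_inner H z z = 0"
    using H_inner_char_matrix_imaginary_eigenvector[OF _ re0 y] unfolding z_def by simp
  then have "z = 0\<^sub>v N" using pd_Re_H_inner_self_eq_0_imp_eq_0[OF H H_pd z] by simp
  with \<open>char_matrix (cmat A) lam *\<^sub>v y \<noteq> 0\<^sub>v N\<close> show False unfolding z_def by simp
qed

lemma imaginary_alg_mult_eq_geom_mult:
  assumes "\<forall>v\<in>carrier_vec N. v \<noteq> 0\<^sub>v N \<longrightarrow> v \<bullet> (H *\<^sub>v v) > 0" and "Re lam = 0"
  shows "alg_mult (cmat A) lam = geom_mult (cmat A) lam"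
  using A imaginary_char_matrix_square_kernel[OF assms]
  by (intro alg_mult_eq_geom_mult_if_square_kernel[of _ N]) auto

end

lemma outer_carrier: "p \<in> carrier_vec N \<Longrightarrow> outer p p \<in> carrier_mat N N"
  unfolding outer_def by auto

lemma transpose_outer: "(outer p r)\<^sup>T = outer r p"
  unfolding outer_def by (intro eq_matI) auto

lemma quadratic_form_outer:
  assumes p: "p \<in> carrier_vec N" and v: "v \<in> carrier_vec N"
  shows "v \<bullet> (outer p p *\<^sub>v v) = (p \<bullet> v)^2"
proof -
  have "v \<bullet> (outer p p *\<^sub>v v) = (\<Sum>i\<in>{0..<N}. v $ i * (\<Sum>j\<in>{0..<N}. p $ i * p $ j * v $ j))"
    using p v unfolding outer_def by (simp add: scalar_prod_def mult_mat_vec_def)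
  also have "\<dots> = (\<Sum>i\<in>{0..<N}. p $ i * v $ i) * (\<Sum>j\<in>{0..<N}. p $ j * v $ j)"
    by (simp add: sum_distrib_left sum_distrib_right algebra_simps)
  also have "\<dots> = (p \<bullet> v)^2" using p v by (simp add: scalar_prod_def power2_eq_square)
  finally show ?thesis .
qed

lemma SBP_pair_H_accretive:
  assumes sbp: "SBP_pair n q a b Dp Dm H S p0 pn x"
    and Hinv: "Hinv \<in> carrier_mat (n+1) (n+1)" "H * Hinv = 1\<^sub>m (n+1)"
  shows "H_accretive (n+1) (Dp + Hinv * outer p0 p0) H (outer p0 p0 + outer pn pn + S)"
proof -
  define N where "N = n + 1"
  define P where "P = outer p0 p0"
  define Pn where "Pn = outer pn pn"
  have Dp: "Dp \<in> carrier_mat N N" and H: "H \<in> carrier_mat N N" and S: "S \<in> carrier_mat N N"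
    and p0: "p0 \<in> carrier_vec N" and pn: "pn \<in> carrier_vec N" and H_sym: "H\<^sup>T = H"
    and SBP: "H * Dp + Dp\<^sup>T * H = - P + Pn + S"
    and S_sym: "S\<^sup>T = S" and S_psd: "\<forall>v \<in> carrier_vec N. v \<bullet> (S *\<^sub>v v) \<ge> 0"
    using sbp unfolding SBP_pair_def N_def P_def Pn_def by auto
  have Hi: "Hinv \<in> carrier_mat N N" and HHi: "H * Hinv = 1\<^sub>m N" using Hinv unfolding N_def by auto
  have P: "P \<in> carrier_mat N N" and Pn: "Pn \<in> carrier_mat N N"
    unfolding P_def Pn_def using p0 pn by (auto intro: outer_carrier)
  have P_sym: "P\<^sup>T = P" and Pn_sym: "Pn\<^sup>T = Pn" unfolding P_def Pn_def by (simp_all add: transpose_outer)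
  have HiH: "Hinv\<^sup>T * H = 1\<^sub>m N"
    using transpose_mult[OF H Hi] H_sym HHi by simp
  have left: "H * (Dp + Hinv * P) = H * Dp + P"
    using H Dp Hi P HHi
    by (simp add: mult_add_distrib_mat[of _ N N] assoc_mult_mat[of _ N N _ N _ N, symmetric])
  have right: "(Dp + Hinv * P)\<^sup>T * H = Dp\<^sup>T * H + P"
    using H Dp Hi P HiH P_sym
    by (simp add: transpose_add[of _ N N] transpose_mult[of _ N N] add_mult_distrib_mat[of _ N N]
        assoc_mult_mat[of _ N N _ N _ N])
  have energy: "H * (Dp + Hinv * P) + (Dp + Hinv * P)\<^sup>T * H = P + Pn + S"
  proof (rule eq_matI)
    fix i j assume "i < dim_row (P + Pn + S)" "j < dim_col (P + Pn + S)"
    then have ij: "i < N" "j < N" using S by auto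
    have "(H * Dp) $$ (i,j) + (Dp\<^sup>T * H) $$ (i,j) = - P $$ (i,j) + Pn $$ (i,j) + S $$ (i,j)"
      using arg_cong[OF SBP, of "\<lambda>X. X $$ (i,j)"] ij H Dp P Pn S by simp
    then show "(H * (Dp + Hinv * P) + (Dp + Hinv * P)\<^sup>T * H) $$ (i, j) = (P + Pn + S) $$ (i, j)"
      unfolding left right using ij H Dp P Pn S by simp
  qed (use H Dp Hi P S in auto)
  have psd: "v \<bullet> ((P + Pn + S) *\<^sub>v v) \<ge> 0" if v: "v \<in> carrier_vec N" for v
  proof -
    have "v \<bullet> ((P + Pn + S) *\<^sub>v v) = (p0 \<bullet> v)^2 + (pn \<bullet> v)^2 + v \<bullet> (S *\<^sub>v v)"
      using P Pn S v quadratic_form_outer[OF p0 v] quadratic_form_outer[OF pn v]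
      by (simp add: P_def Pn_def add_mult_distrib_mat_vec[of _ N N] scalar_prod_add_distrib[of _ N])
    then show ?thesis using S_psd v by simp
  qed
  show ?thesis
    unfolding N_def[symmetric] P_def[symmetric] Pn_def[symmetric]
    using Dp Hi P Pn H S P_sym Pn_sym S_sym energy psd
    by unfold_locales (auto simp: transpose_add)
qed

theorem lemma3:
  fixes n q :: nat and a b :: real
    and Dp Dm H S Hinv :: "real mat" and p0 pn x :: "real vec"
    and lam :: complex and w :: "complex vec"
  assumes "b > a" and "n \<ge> 1" and "q \<ge> 1"
    and sbp: "SBP_pair n q a b Dp Dm H S p0 pn x"
    and Hinv: "Hinv \<in> carrier_mat (n+1) (n+1)" "H * Hinv = 1\<^sub>m (n+1)"
    and eig: "eigenvector (cmat (Dp + Hinv * outer p0 p0)) w lam"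
    and re0: "Re lam = 0"
  shows "(\<forall>v u \<mu>. eigenvector (cmat (Dp + Hinv * outer p0 p0)) v lam \<longrightarrow>
                 eigenvector (cmat (Dp + Hinv * outer p0 p0)) u \<mu> \<longrightarrow> \<mu> \<noteq> lam \<longrightarrow>
                 H_inner H v u = 0)
       \<and> alg_mult (cmat (Dp + Hinv * outer p0 p0)) lam
           = geom_mult (cmat (Dp + Hinv * outer p0 p0)) lam"
proof -
  interpret H_accretive "n+1" "Dp + Hinv * outer p0 p0" H "outer p0 p0 + outer pn pn + S"
    using sbp Hinv by (rule SBP_pair_H_accretive)
  have H_pd: "\<forall>v\<in>carrier_vec (n+1). v \<noteq> 0\<^sub>v (n+1) \<longrightarrow> v \<bullet> (H *\<^sub>v v) > 0"
    using sbp unfolding SBP_pair_def by blast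
  show ?thesis
    using imaginary_eigenvector_H_orthogonal[OF _ re0] imaginary_alg_mult_eq_geom_mult[OF H_pd re0]
    by blast
qed

end
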